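(* Let $\Gamma=(N,A,u)$ be a finite normal form game with $N=\{1,\dots,n\}$ and $n\ge3$, in which every player has the same strategy set $X$, so $A=X^n$. The following are equivalent: (i) $\Gamma$ is fully symmetric (i.e. $u_i=u_{\pi(i)}\circ\pi$ for all $i\in N$ and $\pi\in S_N$) and $u_i=u_j$ for all $i,j\in N$; (ii) for each $i\in N$ and $\pi\in S_N$, $u_i=u_{\pi(i)}\circ\pi^{-1}$.
   Context: For $\sigma\in S_N$ and $s\in A$ write $\sigma(s)=(s_{\sigma^{-1}(i)})_{i\in N}$, and for $f:A\to\mathbb{R}$, $f\circ\sigma$ denotes the map $s\mapsto f(\sigma(s))$. $u_i:A\to\mathbb{R}$ is the utility function of player $i$. *)

theory Defs
  imports Complex_Main "HOL-Combinatorics.Permutations"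
begin

text \<open>Players are the elements of a finite type 'n (so N = UNIV with |N| = CARD('n)),
  every player has the same finite strategy set, the finite type 'x, and a strategy
  profile is s :: 'n \<Rightarrow> 'x (so A = X^N).\<close>

definition perm_profile :: "('n \<Rightarrow> 'n) \<Rightarrow> ('n \<Rightarrow> 'x) \<Rightarrow> ('n \<Rightarrow> 'x)" where
  "perm_profile \<sigma> s = (\<lambda>i. s (inv \<sigma> i))"

definition fully_symmetric :: "('n \<Rightarrow> ('n \<Rightarrow> 'x) \<Rightarrow> real) \<Rightarrow> bool" where
  "fully_symmetric u \<longleftrightarrow>
     (\<forall>i \<pi>. \<pi> permutes (UNIV :: 'n set) \<longrightarrow>
        u i = (\<lambda>s. u (\<pi> i) (perm_profile \<pi> s)))"

end

theory Submission
  imports Defs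
begin

text \<open>Condition (ii) says that u is equivariant: u i s = u (\<pi> i) (s \<circ> \<pi>). If \<sigma> and
  \<sigma> \<circ> \<tau> both send c to j, comparing the equivariance for the two shows that u j is invariant
  under \<tau>, i.e. under every permutation fixing some player c. With at least three players
  every transposition fixes some player, so each u j is invariant under all permutations of
  the profile, and equivariance for the transposition of i and j then gives u i = u j.
  Conversely, once all utilities coincide, full symmetry for inv \<pi> is exactly (ii).\<close>

lemma perm_profile_eq_comp_inv: "perm_profile \<pi> s = s \<circ> inv \<pi>"
  unfolding perm_profile_def by (simp add: o_def)

lemma perm_profile_inv_eq_comp:
  "\<pi> permutes S \<Longrightarrow> perm_profile (inv \<pi>) s = s \<circ> \<pi>"
  by (simp add: perm_profile_eq_comp_inv permutes_inv_inv)

lemma comp_permutes_invariant_if_comp_transpose_invariant: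
  assumes transpose_invariant: "\<And>a b t. a \<in> S \<Longrightarrow> b \<in> S \<Longrightarrow> f (t \<circ> transpose a b) = f t"
    and "\<alpha> permutes S" and "finite S"
  shows "f (s \<circ> \<alpha>) = f s"
  using assms(2,3)
proof (induction arbitrary: s rule: permutes_induct)
  case id
  show ?case by simp
next
  case (swap a b p)
  have "f (s \<circ> (transpose a b \<circ> p)) = f ((s \<circ> transpose a b) \<circ> p)"
    by (simp add: o_assoc)
  also have "\<dots> = f (s \<circ> transpose a b)"
    by (rule swap.IH)
  also have "\<dots> = f s"
    using swap.hyps(1,2) by (rule transpose_invariant)
  finally show ?case .
qed

definition profile_equivariant :: "('n \<Rightarrow> ('n \<Rightarrow> 'x) \<Rightarrow> 'a) \<Rightarrow> bool" where
  "profile_equivariant u \<longleftrightarrow>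
     (\<forall>i \<pi> s. \<pi> permutes (UNIV :: 'n set) \<longrightarrow> u i s = u (\<pi> i) (s \<circ> \<pi>))"

lemma profile_equivariantD:
  "profile_equivariant u \<Longrightarrow> \<pi> permutes UNIV \<Longrightarrow> u i s = u (\<pi> i) (s \<circ> \<pi>)"
  unfolding profile_equivariant_def by blast

lemma profile_equivariant_iff_perm_profile:
  "profile_equivariant u \<longleftrightarrow>
     (\<forall>i \<pi>. \<pi> permutes UNIV \<longrightarrow> u i = (\<lambda>s. u (\<pi> i) (perm_profile (inv \<pi>) s)))"
  unfolding profile_equivariant_def fun_eq_iff
  by (auto simp: perm_profile_inv_eq_comp)

lemma profile_equivariant_comp_transpose_invariant:
  assumes equivariant: "profile_equivariant (u :: 'n \<Rightarrow> ('n \<Rightarrow> 'x) \<Rightarrow> 'a)"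
    and three: "card (UNIV :: 'n set) \<ge> 3"
  shows "u j (t \<circ> transpose a b) = u j t"
proof -
  have "card {a, b} \<le> 2"
    by (cases "a = b") auto
  then have "{a, b} \<noteq> UNIV"
    using three by auto
  then obtain c where c: "c \<noteq> a" "c \<noteq> b"
    by auto
  define \<sigma> where "\<sigma> = transpose c j"
  have \<sigma>_perm: "\<sigma> permutes UNIV" and \<sigma>\<tau>_perm: "\<sigma> \<circ> transpose a b permutes UNIV"
    unfolding \<sigma>_def by (simp_all add: permutes_swap_id permutes_compose)
  have "t \<circ> \<sigma> \<circ> (\<sigma> \<circ> transpose a b) = t \<circ> transpose a b"
    by (simp add: \<sigma>_def fun_eq_iff)
  then have "u j (t \<circ> transpose a b) = u c (t \<circ> \<sigma>)"
    using profile_equivariantD[OF equivariant \<sigma>\<tau>_perm, of c "t \<circ> \<sigma>"] c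
    by (simp add: \<sigma>_def)
  also have "\<dots> = u j t"
    using profile_equivariantD[OF equivariant \<sigma>_perm, of c "t \<circ> \<sigma>"]
    by (simp add: \<sigma>_def comp_assoc)
  finally show ?thesis .
qed

lemma profile_equivariant_comp_permutes_invariant:
  fixes u :: "'n::finite \<Rightarrow> ('n \<Rightarrow> 'x) \<Rightarrow> 'a"
  assumes "profile_equivariant u" and "card (UNIV :: 'n set) \<ge> 3" and "\<alpha> permutes UNIV"
  shows "u j (s \<circ> \<alpha>) = u j s"
proof (rule comp_permutes_invariant_if_comp_transpose_invariant[where S = UNIV and f = "u j"])
  show "u j (t \<circ> transpose a b) = u j t" for a b t
    using assms(1,2) by (rule profile_equivariant_comp_transpose_invariant)
qed (simp_all add: assms(3))

lemma profile_equivariant_utilities_eq: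
  fixes u :: "'n::finite \<Rightarrow> ('n \<Rightarrow> 'x) \<Rightarrow> 'a"
  assumes "profile_equivariant u" and "card (UNIV :: 'n set) \<ge> 3"
  shows "u i = u j"
proof
  fix s
  have transpose_perm: "transpose i j permutes UNIV"
    by (simp add: permutes_swap_id)
  have "u i s = u j (s \<circ> transpose i j)"
    using profile_equivariantD[OF assms(1) transpose_perm, of i s] by simp
  also have "\<dots> = u j s"
    using assms transpose_perm by (rule profile_equivariant_comp_permutes_invariant)
  finally show "u i s = u j s" .
qed

lemma fully_symmetric_if_comp_permutes_invariant:
  fixes u :: "'n \<Rightarrow> ('n \<Rightarrow> 'x) \<Rightarrow> real"
  assumes invariant: "\<And>\<alpha> j s. \<alpha> permutes UNIV \<Longrightarrow> u j (s \<circ> \<alpha>) = u j s"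
    and equal: "\<And>i j. u i = u j"
  shows "fully_symmetric u"
  unfolding fully_symmetric_def perm_profile_eq_comp_inv
proof (intro allI impI ext)
  fix i s and \<pi> :: "'n \<Rightarrow> 'n"
  assume "\<pi> permutes UNIV"
  then have "u (\<pi> i) (s \<circ> inv \<pi>) = u (\<pi> i) s"
    by (intro invariant permutes_inv)
  then show "u i s = u (\<pi> i) (s \<circ> inv \<pi>)"
    using equal[of i "\<pi> i"] by simp
qed

lemma profile_equivariant_if_fully_symmetric_eq:
  fixes u :: "'n \<Rightarrow> ('n \<Rightarrow> 'x) \<Rightarrow> real"
  assumes "fully_symmetric u" and equal: "\<And>i j. u i = u j"
  shows "profile_equivariant u"
  unfolding profile_equivariant_iff_perm_profile
proof (intro allI impI)
  fix i and \<pi> :: "'n \<Rightarrow> 'n"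
  assume "\<pi> permutes UNIV"
  then have "inv \<pi> permutes UNIV"
    by (rule permutes_inv)
  then have "u i = (\<lambda>s. u (inv \<pi> i) (perm_profile (inv \<pi>) s))"
    using assms(1) unfolding fully_symmetric_def by blast
  also have "u (inv \<pi> i) = u (\<pi> i)"
    by (rule equal)
  finally show "u i = (\<lambda>s. u (\<pi> i) (perm_profile (inv \<pi>) s))" .
qed

theorem theorem3p18:
  fixes u :: "'n::finite \<Rightarrow> ('n \<Rightarrow> 'x::finite) \<Rightarrow> real"
  assumes "card (UNIV :: 'n set) \<ge> 3"
  shows "(fully_symmetric u \<and> (\<forall>i j. u i = u j)) \<longleftrightarrow>
         (\<forall>i \<pi>. \<pi> permutes (UNIV :: 'n set) \<longrightarrow>
            u i = (\<lambda>s. u (\<pi> i) (perm_profile (inv \<pi>) s)))"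
  unfolding profile_equivariant_iff_perm_profile[symmetric]
proof
  assume "fully_symmetric u \<and> (\<forall>i j. u i = u j)"
  then show "profile_equivariant u"
    by (intro profile_equivariant_if_fully_symmetric_eq) blast+
next
  assume equivariant: "profile_equivariant u"
  have equal: "u i = u j" for i j
    using equivariant assms by (rule profile_equivariant_utilities_eq)
  have "fully_symmetric u"
    using profile_equivariant_comp_permutes_invariant[OF equivariant assms] equal
    by (rule fully_symmetric_if_comp_permutes_invariant)
  with equal show "fully_symmetric u \<and> (\<forall>i j. u i = u j)"
    by blast
qed

end
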